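(* Let $w_1,w_2$ be real numbers with $0\le w_1<w_2$, $\mathbf{w}=[w_1,w_2]^\top$, and define on $\mathbb{R}^2$ the ROWL penalty $\Omega_{\mathbf{w}}(\mathbf{x})=\mathbf{w}^\top|\mathbf{x}|_{\downarrow}$ and its envelope $\widetilde\Omega_{\mathbf{w}}=(\Omega_{\mathbf{w}}+\tfrac12\|\cdot\|^2)^{**}-\tfrac12\|\cdot\|^2$. For every $\delta>0$, the operator $R_\delta:=\mathrm{s\text{-}Prox}_{\widetilde\Omega_{\mathbf{w}}/(\delta+1)}:\mathbb{R}^2\to\mathbb{R}^2$ is the gradient of a (Fréchet) differentiable convex function, and this gradient is $(1+1/\delta)$-Lipschitz continuous.
   Context: $\|\cdot\|$ is the Euclidean norm on $\mathbb{R}^2$. For $\mathbf{x}\in\mathbb{R}^2$, $|\mathbf{x}|$ is the componentwise absolute value and $|\mathbf{x}|_{\downarrow}$ is $|\mathbf{x}|$ sorted in nonincreasing order. $g^{**}$ denotes the Fenchel biconjugate, where $g^*(u)=\sup_x(\langle x,u\rangle-g(x))$. For a function $g$ such that $\operatorname{argmin}_{\mathbf{y}}\big(g(\mathbf{y})+\frac12\|\mathbf{x}-\mathbf{y}\|^2\big)$ is a singleton for every $\mathbf{x}$, $\mathrm{s\text{-}Prox}_g(\mathbf{x})$ denotes that unique minimizer. *)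

theory Defs
  imports "HOL-Analysis.Analysis"
begin

definition fenchel_conj :: "('a::real_inner \<Rightarrow> ereal) \<Rightarrow> 'a \<Rightarrow> ereal" where
  "fenchel_conj g u = (SUP x. ereal (inner x u) - g x)"

definition fenchel_biconj :: "('a::real_inner \<Rightarrow> ereal) \<Rightarrow> 'a \<Rightarrow> ereal" where
  "fenchel_biconj g = fenchel_conj (fenchel_conj g)"

definition rowl :: "real \<Rightarrow> real \<Rightarrow> real^2 \<Rightarrow> real" where
  "rowl w1 w2 x = w1 * max \<bar>x$1\<bar> \<bar>x$2\<bar> + w2 * min \<bar>x$1\<bar> \<bar>x$2\<bar>"

definition rowl_env :: "real \<Rightarrow> real \<Rightarrow> real^2 \<Rightarrow> ereal" where
  "rowl_env w1 w2 x =
     fenchel_biconj (\<lambda>y. ereal (rowl w1 w2 y + (1/2) * (norm y)^2)) x - ereal ((1/2) * (norm x)^2)"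

definition prox_set :: "('a::real_normed_vector \<Rightarrow> ereal) \<Rightarrow> 'a \<Rightarrow> 'a set" where
  "prox_set g x = {y. \<forall>z. g y + ereal ((1/2) * (norm (x - y))^2) \<le> g z + ereal ((1/2) * (norm (x - z))^2)}"

definition sprox_defined :: "('a::real_normed_vector \<Rightarrow> ereal) \<Rightarrow> bool" where
  "sprox_defined g \<longleftrightarrow> (\<forall>x. \<exists>p. prox_set g x = {p})"

definition s_Prox :: "('a::real_normed_vector \<Rightarrow> ereal) \<Rightarrow> 'a \<Rightarrow> 'a" where
  "s_Prox g x = (THE p. prox_set g x = {p})"

end

theory Submission
  imports Defs
begin

(* Write q = 1/2 ||.||^2. Since Omega_w >= 0, the function Omega_w + q lies above q = q*, so its
   biconjugate B is a finite convex function with q <= B. Up to a constant in y, the objective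
   of the proximal problem at x is B(y)/(delta+1) + mu q(y) - <x,y> with mu = delta/(delta+1),
   a mu-strongly convex function tilted by a linear one. Its unique minimiser is the gradient
   of the conjugate of B/(delta+1) + mu q, and strong convexity makes this gradient
   1/mu = (1 + 1/delta)-Lipschitz. *)

lemma norm_sq_convex_combination:
  fixes p y :: "'a::real_inner"
  shows "(norm ((1 - t) *\<^sub>R p + t *\<^sub>R y))^2
    = (1 - t) * (norm p)^2 + t * (norm y)^2 - t * (1 - t) * (norm (y - p))^2"
  unfolding power2_norm_eq_inner
  by (simp add: inner_add_left inner_add_right inner_diff_left inner_diff_right inner_commute
      algebra_simps)

lemma inner_le_half_norm_sq:
  fixes y u :: "'a::real_inner"
  shows "inner y u \<le> 1/2 * (norm y)^2 + 1/2 * (norm u)^2"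
proof -
  have "0 \<le> (norm (y - u))^2" by simp
  then show ?thesis
    unfolding power2_norm_eq_inner by (simp add: inner_diff_left inner_diff_right inner_commute)
qed

lemma has_derivative_inner_if_quadratic_remainder:
  fixes f :: "'a::real_inner \<Rightarrow> real"
  assumes remainder: "\<And>y. \<bar>f y - f x - inner g (y - x)\<bar> \<le> L * (norm (y - x))^2"
  shows "(f has_derivative (\<lambda>h. inner g h)) (at x)"
  unfolding has_derivative_at_alt
proof (intro conjI allI impI bounded_linear_inner_right)
  fix e :: real assume "e > 0"
  show "\<exists>d>0. \<forall>y. norm (y - x) < d \<longrightarrow> norm (f y - f x - inner g (y - x)) \<le> e * norm (y - x)"
  proof (intro exI[of _ "e / (\<bar>L\<bar> + 1)"] conjI allI impI)
    show "e / (\<bar>L\<bar> + 1) > 0" using \<open>e > 0\<close> by simp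
    fix y assume "norm (y - x) < e / (\<bar>L\<bar> + 1)"
    then have "(\<bar>L\<bar> + 1) * norm (y - x) \<le> e" by (simp add: field_simps)
    then have "(\<bar>L\<bar> + 1) * norm (y - x) * norm (y - x) \<le> e * norm (y - x)"
      by (simp add: mult_right_mono)
    moreover have "L * (norm (y - x))^2 \<le> (\<bar>L\<bar> + 1) * norm (y - x) * norm (y - x)"
      by (simp add: power2_eq_square mult.assoc mult_right_mono)
    ultimately show "norm (f y - f x - inner g (y - x)) \<le> e * norm (y - x)"
      using remainder[of y] by simp
  qed
qed

lemma fenchel_conj_real:
  "fenchel_conj (\<lambda>x. ereal (h x)) u = (SUP x. ereal (inner x u - h x))"
  by (simp add: fenchel_conj_def)

lemma fenchel_young:
  "ereal (inner x u - h x) \<le> fenchel_conj (\<lambda>x. ereal (h x)) u"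
  unfolding fenchel_conj_real by (rule SUP_upper) simp

lemma convex_on_fenchel_conj:
  fixes h :: "'a::real_inner \<Rightarrow> real"
  assumes finite: "\<And>u. fenchel_conj (\<lambda>x. ereal (h x)) u = ereal (hs u)"
  shows "convex_on UNIV hs"
proof (rule convex_onI)
  fix t :: real and a b :: 'a assume t: "0 < t" "t < 1"
  have "fenchel_conj (\<lambda>x. ereal (h x)) ((1 - t) *\<^sub>R a + t *\<^sub>R b) \<le> ereal ((1 - t) * hs a + t * hs b)"
    unfolding fenchel_conj_real
  proof (rule SUP_least)
    fix x
    have "inner x a - h x \<le> hs a" "inner x b - h x \<le> hs b"
      using fenchel_young[of x _ h] finite by simp_all
    then have "(1 - t) * (inner x a - h x) + t * (inner x b - h x) \<le> (1 - t) * hs a + t * hs b"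
      using t by (intro add_mono mult_left_mono) auto
    then show "ereal (inner x ((1 - t) *\<^sub>R a + t *\<^sub>R b) - h x) \<le> ereal ((1 - t) * hs a + t * hs b)"
      by (simp add: inner_add_right algebra_simps)
  qed
  then show "hs ((1 - t) *\<^sub>R a + t *\<^sub>R b) \<le> (1 - t) * hs a + t * hs b"
    by (simp add: finite)
qed auto

lemma fenchel_conj_le_half_norm_sq:
  assumes "\<And>y. 1/2 * (norm y)^2 \<le> h y"
  shows "fenchel_conj (\<lambda>y. ereal (h y)) u \<le> ereal (1/2 * (norm u)^2)"
  unfolding fenchel_conj_real
proof (rule SUP_least)
  fix y
  show "ereal (inner y u - h y) \<le> ereal (1/2 * (norm u)^2)"
    using inner_le_half_norm_sq[of y u] assms[of y] by simp
qed

text \<open>A function above \<open>q\<close> has a conjugate below \<open>q\<^sup>* = q\<close>, hence a biconjugate above \<open>q\<close>.\<close>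

lemma fenchel_biconj_above_half_norm_sq:
  fixes h :: "'a::real_inner \<Rightarrow> real"
  assumes above: "\<And>y. 1/2 * (norm y)^2 \<le> h y"
  obtains B where "convex_on UNIV B" and "\<And>y. 1/2 * (norm y)^2 \<le> B y"
    and "\<And>y. fenchel_biconj (\<lambda>y. ereal (h y)) y = ereal (B y)"
proof -
  define hs where "hs u = real_of_ereal (fenchel_conj (\<lambda>y. ereal (h y)) u)" for u
  have conj_finite: "fenchel_conj (\<lambda>y. ereal (h y)) u = ereal (hs u)" for u
  proof -
    have "ereal (- h 0) \<le> fenchel_conj (\<lambda>y. ereal (h y)) u"
      using fenchel_young[of 0 u h] by simp
    then show ?thesis
      using fenchel_conj_le_half_norm_sq[OF above, of u] unfolding hs_def
      by (cases "fenchel_conj (\<lambda>y. ereal (h y)) u") auto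
  qed
  have hs_le: "hs u \<le> 1/2 * (norm u)^2" for u
    using fenchel_conj_le_half_norm_sq[OF above, of u] by (simp add: conj_finite)
  have biconj: "fenchel_biconj (\<lambda>y. ereal (h y)) = fenchel_conj (\<lambda>u. ereal (hs u))"
    unfolding fenchel_biconj_def by (metis conj_finite ext)
  define B where "B x = real_of_ereal (fenchel_conj (\<lambda>u. ereal (hs u)) x)" for x
  have lower: "ereal (1/2 * (norm x)^2) \<le> fenchel_conj (\<lambda>u. ereal (hs u)) x" for x
  proof -
    have "1/2 * (norm x)^2 \<le> inner x x - hs x"
      using hs_le[of x] by (simp add: power2_norm_eq_inner)
    then show ?thesis using fenchel_young[of x x hs] by (meson ereal_less_eq(3) order_trans)
  qed
  have upper: "fenchel_conj (\<lambda>u. ereal (hs u)) x \<le> ereal (h x)" for x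
    unfolding fenchel_conj_real
  proof (rule SUP_least)
    fix u
    have "inner x u - h x \<le> hs u" using fenchel_young[of x u h] by (simp add: conj_finite)
    then show "ereal (inner u x - hs u) \<le> ereal (h x)" by (simp add: inner_commute)
  qed
  have B: "fenchel_conj (\<lambda>u. ereal (hs u)) x = ereal (B x)" for x
    using lower[of x] upper[of x] unfolding B_def
    by (cases "fenchel_conj (\<lambda>u. ereal (hs u)) x") auto
  show thesis
  proof
    show "convex_on UNIV B" by (rule convex_on_fenchel_conj[OF B])
    show "1/2 * (norm y)^2 \<le> B y" for y using lower[of y] by (simp add: B)
    show "fenchel_biconj (\<lambda>y. ereal (h y)) y = ereal (B y)" for y by (simp add: biconj B)
  qed
qed

lemma convex_plus_half_norm_sq_growth:
  fixes C :: "'a::real_inner \<Rightarrow> real"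
  assumes convex: "convex_on UNIV C"
    and min: "\<And>z. C p + \<mu>/2 * (norm p)^2 \<le> C z + \<mu>/2 * (norm z)^2"
  shows "C p + \<mu>/2 * (norm p)^2 + \<mu>/2 * (norm (y - p))^2 \<le> C y + \<mu>/2 * (norm y)^2"
proof -
  let ?F = "\<lambda>z. C z + \<mu>/2 * (norm z)^2" and ?K = "\<mu>/2 * (norm (y - p))^2"
  have "s * ?K \<le> ?F y - ?F p" if s: "0 < s" "s < 1" for s
  proof -
    let ?z = "(1 - s) *\<^sub>R y + s *\<^sub>R p"
    have "C ?z \<le> (1 - s) * C y + s * C p"
      using convex s by (intro convex_onD) auto
    moreover have "\<mu>/2 * (norm ?z)^2
        = (1 - s) * (\<mu>/2 * (norm y)^2) + s * (\<mu>/2 * (norm p)^2) - s * (1 - s) * ?K"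
      unfolding norm_sq_convex_combination norm_minus_commute[of p] by (simp add: field_simps)
    moreover have "?F p \<le> ?F ?z" by (rule min)
    ultimately have "?F p \<le> (1 - s) * ?F y + s * ?F p - s * (1 - s) * ?K" by argo
    then have "(1 - s) * (?F p + s * ?K) \<le> (1 - s) * ?F y" by argo
    then have "?F p + s * ?K \<le> ?F y" by (rule mult_left_le_imp_le) (use \<open>s < 1\<close> in simp)
    then show ?thesis by argo
  qed
  then have "?K \<le> ?F y - ?F p" by (rule field_le_mult_one_interval)
  then show ?thesis by argo
qed

locale convex_plus_quadratic =
  fixes C :: "'a::euclidean_space \<Rightarrow> real" and \<mu> :: real
  assumes convex: "convex_on UNIV C" and nonneg: "\<And>y. 0 \<le> C y" and mu_pos: "0 < \<mu>"
begin

definition tilted :: "'a \<Rightarrow> 'a \<Rightarrow> real" where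
  "tilted x y = C y + \<mu>/2 * (norm y)^2 - inner x y"

definition argmin :: "'a \<Rightarrow> 'a" where
  "argmin x = (THE p. {y. \<forall>z. tilted x y \<le> tilted x z} = {p})"

text \<open>The Fenchel conjugate of \<open>C + \<mu>/2 \<parallel>\<cdot>\<parallel>\<^sup>2\<close>.\<close>

definition conjugate :: "'a \<Rightarrow> real" where
  "conjugate x = - tilted x (argmin x)"

lemma tilted_quadratic_growth:
  assumes "\<And>z. tilted x p \<le> tilted x z"
  shows "tilted x p + \<mu>/2 * (norm (y - p))^2 \<le> tilted x y"
proof -
  have "convex_on UNIV (\<lambda>y. C y - inner x y)"
  proof (rule convex_onI)
    fix t :: real and a b :: 'a assume "0 < t" "t < 1"
    then have "C ((1 - t) *\<^sub>R a + t *\<^sub>R b) \<le> (1 - t) * C a + t * C b"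
      using convex by (intro convex_onD) auto
    then show "C ((1 - t) *\<^sub>R a + t *\<^sub>R b) - inner x ((1 - t) *\<^sub>R a + t *\<^sub>R b)
        \<le> (1 - t) * (C a - inner x a) + t * (C b - inner x b)"
      by (simp add: inner_add_right algebra_simps)
  qed auto
  moreover have "(C p - inner x p) + \<mu>/2 * (norm p)^2 \<le> (C z - inner x z) + \<mu>/2 * (norm z)^2" for z
    using assms[of z] unfolding tilted_def by linarith
  ultimately have "(C p - inner x p) + \<mu>/2 * (norm p)^2 + \<mu>/2 * (norm (y - p))^2
      \<le> (C y - inner x y) + \<mu>/2 * (norm y)^2"
    by (rule convex_plus_half_norm_sq_growth)
  then show ?thesis by (simp add: tilted_def)
qed

lemma tilted_has_minimizer: "\<exists>p. \<forall>z. tilted x p \<le> tilted x z"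
proof -
  define R where "R = 2 * (norm x + C 0) / \<mu> + 1"
  have "R \<ge> 1" using mu_pos nonneg[of 0] by (simp add: R_def)
  have "continuous_on UNIV C" by (rule convex_on_continuous) (auto simp: convex)
  then have "continuous_on UNIV (tilted x)"
    unfolding tilted_def by (intro continuous_intros)
  then have "continuous_on (cball 0 R) (tilted x)" by (rule continuous_on_subset) simp
  moreover have "cball 0 R \<noteq> {}" using \<open>R \<ge> 1\<close> by simp
  ultimately obtain p where p: "\<And>z. z \<in> cball 0 R \<Longrightarrow> tilted x p \<le> tilted x z"
    using continuous_attains_inf[OF compact_cball] by blast
  have "tilted x p \<le> tilted x z" for z
  proof (cases "z \<in> cball 0 R")
    case False
    then have "norm z \<ge> 1" "\<mu>/2 * R \<le> \<mu>/2 * norm z"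
      using \<open>R \<ge> 1\<close> mu_pos by auto
    moreover have "\<mu>/2 * R = norm x + C 0 + \<mu>/2" using mu_pos by (simp add: R_def field_simps)
    ultimately have "C 0 \<le> \<mu>/2 * norm z - norm x" using mu_pos by linarith
    also have "\<dots> \<le> norm z * (\<mu>/2 * norm z - norm x)"
      using \<open>norm z \<ge> 1\<close> calculation nonneg[of 0] by (simp add: mult_le_cancel_right1)
    also have "\<dots> \<le> tilted x z"
      using norm_cauchy_schwarz[of x z] nonneg[of z] unfolding tilted_def
      by (simp add: algebra_simps power2_eq_square)
    finally show ?thesis using p[of 0] \<open>R \<ge> 1\<close> by (simp add: tilted_def)
  qed (use p in auto)
  then show ?thesis by blast
qed

lemma minimizers_tilted: "{y. \<forall>z. tilted x y \<le> tilted x z} = {argmin x}"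
proof -
  obtain p where p: "\<And>z. tilted x p \<le> tilted x z" using tilted_has_minimizer by blast
  have "q = p" if "\<forall>z. tilted x q \<le> tilted x z" for q
  proof -
    have "\<mu>/2 * (norm (q - p))^2 \<le> 0"
      using tilted_quadratic_growth[OF p, of q] that[rule_format, of p] by linarith
    then show "q = p" using mu_pos by (simp add: mult_le_0_iff)
  qed
  then have "{y. \<forall>z. tilted x y \<le> tilted x z} = {p}" using p by blast
  then show ?thesis unfolding argmin_def by simp
qed

lemma tilted_argmin_le: "tilted x (argmin x) \<le> tilted x z"
  using minimizers_tilted[of x] by auto

lemma argmin_strongly_monotone:
  "\<mu> * (norm (argmin a - argmin b))^2 \<le> inner (a - b) (argmin a - argmin b)"
proof -
  have "tilted a (argmin a) + \<mu>/2 * (norm (argmin b - argmin a))^2 \<le> tilted a (argmin b)"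
    "tilted b (argmin b) + \<mu>/2 * (norm (argmin a - argmin b))^2 \<le> tilted b (argmin a)"
    by (intro tilted_quadratic_growth tilted_argmin_le)+
  then show ?thesis
    unfolding tilted_def norm_minus_commute[of "argmin b"]
    by (simp add: inner_diff_left inner_diff_right inner_commute algebra_simps)
qed

lemma argmin_lipschitz: "(1/\<mu>)-lipschitz_on UNIV argmin"
proof (rule lipschitz_onI)
  fix a b :: 'a
  have "\<mu> * norm (argmin a - argmin b) * norm (argmin a - argmin b)
      \<le> norm (a - b) * norm (argmin a - argmin b)"
    using order_trans[OF argmin_strongly_monotone norm_cauchy_schwarz]
    by (simp add: power2_eq_square mult.assoc)
  then have "\<mu> * norm (argmin a - argmin b) \<le> norm (a - b)"
    by (cases "argmin a = argmin b") (auto simp: mult_le_cancel_right)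
  then show "dist (argmin a) (argmin b) \<le> 1/\<mu> * dist a b"
    using mu_pos by (simp add: dist_norm field_simps)
qed (use mu_pos in simp)

lemma conjugate_ge: "- tilted x y \<le> conjugate x"
  unfolding conjugate_def using tilted_argmin_le by simp

lemma convex_on_conjugate: "convex_on UNIV conjugate"
proof (rule convex_onI)
  fix t :: real and a b :: 'a assume t: "0 < t" "t < 1"
  let ?z = "(1 - t) *\<^sub>R a + t *\<^sub>R b"
  have "tilted ?z y = (1 - t) * tilted a y + t * tilted b y" for y
  proof -
    have "inner ?z y = (1 - t) * inner a y + t * inner b y" by (simp add: inner_add_left)
    then show ?thesis unfolding tilted_def by (simp add: field_simps)
  qed
  then have "conjugate ?z = (1 - t) * (- tilted a (argmin ?z)) + t * (- tilted b (argmin ?z))"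
    unfolding conjugate_def by simp
  also have "\<dots> \<le> (1 - t) * conjugate a + t * conjugate b"
    using t conjugate_ge by (intro add_mono mult_left_mono) auto
  finally show "conjugate ?z \<le> (1 - t) * conjugate a + t * conjugate b" .
qed auto

text \<open>The conjugate is squeezed between its linearisations at \<open>x\<close> and at \<open>y\<close>, whose slopes
  \<open>argmin x\<close> and \<open>argmin y\<close> differ by at most \<open>\<parallel>y - x\<parallel>/\<mu>\<close>.\<close>

lemma conjugate_has_derivative: "(conjugate has_derivative (\<lambda>h. inner (argmin x) h)) (at x)"
proof (rule has_derivative_inner_if_quadratic_remainder)
  fix y
  have lower: "0 \<le> conjugate y - conjugate x - inner (argmin x) (y - x)"
    using conjugate_ge[of y "argmin x"] unfolding conjugate_def tilted_def
    by (simp add: inner_diff_left inner_diff_right inner_commute)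
  have "conjugate y - conjugate x - inner (argmin x) (y - x) \<le> inner (y - x) (argmin y - argmin x)"
    using conjugate_ge[of x "argmin y"] unfolding conjugate_def tilted_def
    by (simp add: inner_diff_left inner_diff_right inner_commute)
  also have "\<dots> \<le> norm (y - x) * norm (argmin y - argmin x)" by (rule norm_cauchy_schwarz)
  also have "\<dots> \<le> norm (y - x) * (1/\<mu> * norm (y - x))"
    using lipschitz_onD[OF argmin_lipschitz, of y x] unfolding dist_norm
    by (metis mult_left_mono norm_ge_zero UNIV_I)
  finally show "\<bar>conjugate y - conjugate x - inner (argmin x) (y - x)\<bar> \<le> 1/\<mu> * (norm (y - x))^2"
    using lower by (simp add: power2_eq_square algebra_simps)
qed

end

lemma rowl_nonneg:
  assumes "0 \<le> w1" "0 \<le> w2"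
  shows "0 \<le> rowl w1 w2 y"
  unfolding rowl_def using assms by simp

lemma scaled_envelope_prox_objective:
  fixes x y :: "'a::real_inner"
  assumes "0 < \<delta>"
  shows "(ereal (B y) - ereal (1/2 * (norm y)^2)) * ereal (1 / (\<delta> + 1))
      + ereal (1/2 * (norm (x - y))^2)
    = ereal (B y / (\<delta> + 1) + \<delta> / (\<delta> + 1) / 2 * (norm y)^2 - inner x y + 1/2 * (norm x)^2)"
proof -
  have n: "(norm (x - y))^2 = (norm x)^2 - 2 * inner x y + (norm y)^2"
    unfolding power2_norm_eq_inner by (simp add: inner_diff_left inner_diff_right inner_commute)
  have "\<delta> + 1 \<noteq> 0" using assms by simp
  then have "(B y - 1/2 * (norm y)^2) * (1 / (\<delta> + 1)) + 1/2 * (norm (x - y))^2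
      = B y / (\<delta> + 1) + \<delta> / (\<delta> + 1) / 2 * (norm y)^2 - inner x y + 1/2 * (norm x)^2"
    unfolding n by (simp add: divide_simps) algebra
  then show ?thesis by simp
qed

theorem corollary2:
  fixes w1 w2 \<delta> :: real
  assumes "0 \<le> w1" and "w1 < w2" and "\<delta> > 0"
  shows "sprox_defined (\<lambda>y. rowl_env w1 w2 y * ereal (1 / (\<delta> + 1))) \<and>
    (\<exists>f :: real^2 \<Rightarrow> real. convex_on UNIV f \<and>
       (\<forall>x. (f has_derivative
              (\<lambda>h. inner (s_Prox (\<lambda>y. rowl_env w1 w2 y * ereal (1 / (\<delta> + 1))) x) h)) (at x)) \<and>
       lipschitz_on (1 + 1 / \<delta>) UNIV (s_Prox (\<lambda>y. rowl_env w1 w2 y * ereal (1 / (\<delta> + 1)))))"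
proof -
  define \<phi> where "\<phi> y = rowl_env w1 w2 y * ereal (1 / (\<delta> + 1))" for y
  obtain B where "convex_on UNIV B" and B_ge: "\<And>y. 1/2 * (norm y)^2 \<le> B y"
    and B: "\<And>y. fenchel_biconj (\<lambda>y. ereal (rowl w1 w2 y + 1/2 * (norm y)^2)) y = ereal (B y)"
    by (rule fenchel_biconj_above_half_norm_sq[of "\<lambda>y. rowl w1 w2 y + 1/2 * (norm y)^2"])
      (use rowl_nonneg assms in auto)
  interpret convex_plus_quadratic "\<lambda>y. B y / (\<delta> + 1)" "\<delta> / (\<delta> + 1)"
  proof
    show "convex_on UNIV (\<lambda>y. B y / (\<delta> + 1))"
      using \<open>convex_on UNIV B\<close> assms(3) by (intro convex_on_cdiv) auto
    show "0 \<le> B y / (\<delta> + 1)" for y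
      using order_trans[OF _ B_ge[of y]] assms(3) by simp
  qed (use assms(3) in simp)
  have "prox_set \<phi> x = {argmin x}" for x
    unfolding prox_set_def \<phi>_def rowl_env_def B scaled_envelope_prox_objective[OF assms(3)]
    by (simp flip: minimizers_tilted add: tilted_def)
  then have "sprox_defined \<phi>" and "s_Prox \<phi> = argmin"
    by (auto simp: sprox_defined_def s_Prox_def)
  moreover have "1 / (\<delta> / (\<delta> + 1)) = 1 + 1 / \<delta>" using assms(3) by (simp add: field_simps)
  ultimately show ?thesis
    unfolding \<phi>_def[symmetric]
    using convex_on_conjugate conjugate_has_derivative argmin_lipschitz by auto
qed

end
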